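(* Let $l\ge 3$, $\mathfrak g=\mathfrak{sl}_{l+1}(\mathbb C)$, $v'_{l,1}=e_{\epsilon_1-\epsilon_{l+1}}e_{\epsilon_2-\epsilon_l}-e_{\epsilon_2-\epsilon_{l+1}}e_{\epsilon_1-\epsilon_l}\in U(\mathfrak g)$, $R$ the adjoint $\mathfrak g$-submodule of $U(\mathfrak g)$ generated by $v'_{l,1}$, $R_0$ its zero-weight subspace, and $\mathcal P_0=\{p_r : r\in R_0\}$. Define polynomials in $h_1,\dots,h_l$: (1) $p_{ij}(h)=h_ih_j$ for $i=1,\dots,l-2$ and $j$ with $j-i\ge 2$ (and $j\le l$); (2) $q_i(h)=h_i(h_{i-1}+h_i+h_{i+1}+1)$ for $i=2,\dots,l-1$. Then all $p_{ij}$ and $q_i$ belong to $\mathcal P_0$.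
   Context: $\mathfrak g=\mathfrak{sl}_{l+1}(\mathbb C)$ with Cartan subalgebra $\mathfrak h$ of traceless diagonal matrices, triangular decomposition $\mathfrak g=\mathfrak n_-\oplus\mathfrak h\oplus\mathfrak n_+$ ($\mathfrak n_+$ strictly upper triangular), simple roots $\alpha_i=\epsilon_i-\epsilon_{i+1}$. For $i<j$: $e_{\epsilon_i-\epsilon_j}=(-1)^{j-i-1}E_{ij}$, $f_{\epsilon_i-\epsilon_j}=(-1)^{j-i-1}E_{ji}$, $h_{\epsilon_i-\epsilon_j}=E_{ii}-E_{jj}$, $h_i=h_{\alpha_i}$. The adjoint action is $X_L f=[X,f]$. For $r\in R_0$, $p_r$ denotes the unique element of $S(\mathfrak h)=\mathbb C[h_1,\dots,h_l]$ with $r-p_r\in U(\mathfrak g)\mathfrak n_+$; equivalently $r v_\mu=p_r(\mu)v_\mu$ for every highest weight vector $v_\mu$ of weight $\mu\in\mathfrak h^*$ (polynomials are evaluated at $\mu$ via $h_i\mapsto\mu(h_i)$). *)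

theory Defs
  imports Complex_Main
begin

text \<open>Matrices of size (l+1)x(l+1), indices 1..l+1, as functions with support in that range.\<close>
type_synonym mat = "nat \<Rightarrow> nat \<Rightarrow> complex"

definition sl :: "nat \<Rightarrow> mat set" where
  "sl l = {A. (\<forall>i j. A i j \<noteq> 0 \<longrightarrow> i \<in> {1..l+1} \<and> j \<in> {1..l+1})
              \<and> (\<Sum>i=1..l+1. A i i) = 0}"

definition madd :: "mat \<Rightarrow> mat \<Rightarrow> mat" where
  "madd A B = (\<lambda>i j. A i j + B i j)"

definition msc :: "complex \<Rightarrow> mat \<Rightarrow> mat" where
  "msc c A = (\<lambda>i j. c * A i j)"

definition mbr :: "nat \<Rightarrow> mat \<Rightarrow> mat \<Rightarrow> mat" where
  "mbr l A B = (\<lambda>i j. (\<Sum>k=1..l+1. A i k * B k j - B i k * A k j))"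

definition Emat :: "nat \<Rightarrow> nat \<Rightarrow> mat" where
  "Emat a b = (\<lambda>i j. if i = a \<and> j = b then 1 else 0)"

definition cartan :: "nat \<Rightarrow> mat set" where
  "cartan l = {H \<in> sl l. \<forall>i j. i \<noteq> j \<longrightarrow> H i j = 0}"

definition nplus :: "nat \<Rightarrow> mat set" where
  "nplus l = {X \<in> sl l. \<forall>i j. j \<le> i \<longrightarrow> X i j = 0}"

text \<open>Tensor algebra T(g) (free associative algebra on the set g):
  finitely supported functions from words of elements of g to complex numbers.\<close>
type_synonym tens = "mat list \<Rightarrow> complex"

definition tspace :: "nat \<Rightarrow> tens set" where
  "tspace l = {f. finite {w. f w \<noteq> 0} \<and> (\<forall>w. f w \<noteq> 0 \<longrightarrow> set w \<subseteq> sl l)}"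

definition tzero :: tens where "tzero = (\<lambda>w. 0)"
definition tone :: tens where "tone = (\<lambda>w. if w = [] then 1 else 0)"
definition tgen :: "mat \<Rightarrow> tens" where "tgen A = (\<lambda>w. if w = [A] then 1 else 0)"
definition tadd :: "tens \<Rightarrow> tens \<Rightarrow> tens" where "tadd f g = (\<lambda>w. f w + g w)"
definition tsc :: "complex \<Rightarrow> tens \<Rightarrow> tens" where "tsc c f = (\<lambda>w. c * f w)"
definition tsub :: "tens \<Rightarrow> tens \<Rightarrow> tens" where "tsub f g = (\<lambda>w. f w - g w)"
definition tmul :: "tens \<Rightarrow> tens \<Rightarrow> tens" where
  "tmul f g = (\<lambda>w. \<Sum>k\<in>{0..length w}. f (take k w) * g (drop k w))"

text \<open>Two-sided ideal I with U(g) = T(g)/I: generated by the linearity relations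
  of the embedding g -> T(g) and by XY - YX - [X,Y].\<close>
inductive_set uideal :: "nat \<Rightarrow> tens set" for l where
  zero: "tzero \<in> uideal l"
| lin_add: "A \<in> sl l \<Longrightarrow> B \<in> sl l \<Longrightarrow> tsub (tgen (madd A B)) (tadd (tgen A) (tgen B)) \<in> uideal l"
| lin_sc: "A \<in> sl l \<Longrightarrow> tsub (tgen (msc c A)) (tsc c (tgen A)) \<in> uideal l"
| comm: "A \<in> sl l \<Longrightarrow> B \<in> sl l \<Longrightarrow>
     tsub (tsub (tmul (tgen A) (tgen B)) (tmul (tgen B) (tgen A))) (tgen (mbr l A B)) \<in> uideal l"
| add: "x \<in> uideal l \<Longrightarrow> y \<in> uideal l \<Longrightarrow> tadd x y \<in> uideal l"
| sc: "x \<in> uideal l \<Longrightarrow> tsc c x \<in> uideal l"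
| lmul: "x \<in> uideal l \<Longrightarrow> a \<in> tspace l \<Longrightarrow> tmul a x \<in> uideal l"
| rmul: "x \<in> uideal l \<Longrightarrow> a \<in> tspace l \<Longrightarrow> tmul x a \<in> uideal l"

text \<open>Preimage in T(g) of the left ideal U(g) n_+.\<close>
inductive_set leftN :: "nat \<Rightarrow> tens set" for l where
  ideal: "x \<in> uideal l \<Longrightarrow> x \<in> leftN l"
| gen: "a \<in> tspace l \<Longrightarrow> X \<in> nplus l \<Longrightarrow> tmul a (tgen X) \<in> leftN l"
| add: "x \<in> leftN l \<Longrightarrow> y \<in> leftN l \<Longrightarrow> tadd x y \<in> leftN l"
| sc: "x \<in> leftN l \<Longrightarrow> tsc c x \<in> leftN l"

text \<open>Root vectors e_{eps_a - eps_b} = (-1)^(b-a-1) E_{ab} for a<b, and h_i.\<close>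
definition eroot :: "nat \<Rightarrow> nat \<Rightarrow> mat" where
  "eroot a b = msc ((-1) ^ (b - a - 1)) (Emat a b)"

definition hh :: "nat \<Rightarrow> tens" where
  "hh i = tgen (madd (Emat i i) (msc (-1) (Emat (Suc i) (Suc i))))"

definition vprime :: "nat \<Rightarrow> tens" where
  "vprime l = tsub (tmul (tgen (eroot 1 (l+1))) (tgen (eroot 2 l)))
                   (tmul (tgen (eroot 2 (l+1))) (tgen (eroot 1 l)))"

text \<open>Preimage in T(g) of the adjoint submodule R generated by v' (ad_X u = Xu - uX).\<close>
inductive_set Rmod :: "nat \<Rightarrow> tens set" for l where
  base: "vprime l \<in> Rmod l"
| ideal: "x \<in> uideal l \<Longrightarrow> x \<in> Rmod l"
| ad: "x \<in> Rmod l \<Longrightarrow> X \<in> sl l \<Longrightarrow> tsub (tmul (tgen X) x) (tmul x (tgen X)) \<in> Rmod l"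
| add: "x \<in> Rmod l \<Longrightarrow> y \<in> Rmod l \<Longrightarrow> tadd x y \<in> Rmod l"
| sc: "x \<in> Rmod l \<Longrightarrow> tsc c x \<in> Rmod l"

definition R0 :: "nat \<Rightarrow> tens set" where
  "R0 l = {r \<in> Rmod l. \<forall>H \<in> cartan l. tsub (tmul (tgen H) r) (tmul r (tgen H)) \<in> uideal l}"

text \<open>p (a polynomial in h_1..h_l, realised as an element of S(h) \<subseteq> U(g)) lies in P_0
  iff p = p_r for some r in R_0, i.e. r - p \<in> U(g) n_+ (p_r is unique).\<close>
definition inP0 :: "nat \<Rightarrow> tens \<Rightarrow> bool" where
  "inP0 l p \<longleftrightarrow> (\<exists>r \<in> R0 l. tsub r p \<in> leftN l)"

end

theory Submission
  imports Defs "HOL-Library.Function_Algebras"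
begin

text \<open>
  Write \<open>E\<^sub>a\<^sub>b\<close> for the matrix units and \<open>minor a b c d = E\<^sub>a\<^sub>c E\<^sub>b\<^sub>d - E\<^sub>b\<^sub>c E\<^sub>a\<^sub>d\<close>.
  Modulo the defining ideal of \<open>U(g)\<close>, \<open>v'\<close> is \<open>minor 1 2 (l+1) l\<close>: the signs of the root
  vectors cancel. The adjoint action of \<open>E\<^sub>x\<^sub>a\<close> replaces the index \<open>a\<close> of a minor by a fresh
  index \<open>x\<close>, and a minor only changes by a nonzero factor when two adjacent indices are exchanged,
  so \<open>R\<close> contains the minors of all quadruples of distinct indices. Applying \<open>ad E\<^sub>b\<^sub>a\<close> and then
  \<open>ad E\<^sub>d\<^sub>c\<close> to \<open>minor a c b d\<close> gives a zero-weight element of \<open>R\<close>. Modulo \<open>U(g) n\<^sub>+\<close> a product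
  \<open>E\<^sub>y\<^sub>x E\<^sub>x\<^sub>y\<close> with \<open>x < y\<close> vanishes and \<open>E\<^sub>x\<^sub>y E\<^sub>y\<^sub>x\<close> reduces to \<open>E\<^sub>x\<^sub>x - E\<^sub>y\<^sub>y\<close>, so this element
  projects to a quadratic polynomial in the \<open>h\<^sub>i\<close>; the quadruples \<open>(i, i+1, j, j+1)\<close> and
  \<open>(i+1, i, i+2, i-1)\<close> give \<open>h\<^sub>i h\<^sub>j\<close> and \<open>h\<^sub>i (h\<^sub>i\<^sub>-\<^sub>1 + h\<^sub>i + h\<^sub>i\<^sub>+\<^sub>1 + 1)\<close>.
\<close>

lemma tadd_eq_plus [simp]: "tadd f g = f + g"
  by (rule ext) (simp add: tadd_def)

lemma tsub_eq_minus [simp]: "tsub f g = f - g"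
  by (rule ext) (simp add: tsub_def)

lemma tzero_eq_zero [simp]: "tzero = 0"
  by (rule ext) (simp add: tzero_def)

lemma tmul_Nil: "tmul f g [] = f [] * g []"
  by (simp add: tmul_def)

lemma tmul_Cons: "tmul f g (x # w) = f [] * g (x # w) + tmul (\<lambda>u. f (x # u)) g w"
  unfolding tmul_def by (simp only: length_Cons sum.atLeast0_atMost_Suc_shift) simp

lemma tmul_linear_left: "tmul (\<lambda>u. c * f u + f' u) g w = c * tmul f g w + tmul f' g w"
  by (simp add: tmul_def sum.distrib sum_distrib_left algebra_simps)

lemma tmul_assoc: "tmul (tmul f g) h = tmul f (tmul g h)"
proof (rule ext)
  fix w show "tmul (tmul f g) h w = tmul f (tmul g h) w"
  proof (induction w arbitrary: f)
    case Nil
    then show ?case by (simp add: tmul_Nil)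
  next
    case (Cons x w)
    have "(\<lambda>u. tmul f g (x # u)) = (\<lambda>u. f [] * g (x # u) + tmul (\<lambda>u. f (x # u)) g u)"
      by (simp add: tmul_Cons)
    then have "tmul (tmul f g) h (x # w) =
        f [] * g [] * h (x # w) + (f [] * tmul (\<lambda>u. g (x # u)) h w + tmul (tmul (\<lambda>u. f (x # u)) g) h w)"
      by (simp add: tmul_Cons tmul_Nil tmul_linear_left)
    then show ?case
      by (simp add: tmul_Cons tmul_Nil Cons.IH algebra_simps)
  qed
qed

lemma tmul_add_left [simp]: "tmul (f + g) h = tmul f h + tmul g h"
  by (rule ext) (simp add: tmul_def sum.distrib algebra_simps)

lemma tmul_add_right [simp]: "tmul h (f + g) = tmul h f + tmul h g"
  by (rule ext) (simp add: tmul_def sum.distrib algebra_simps)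

lemma tmul_diff_left [simp]: "tmul (f - g) h = tmul f h - tmul g h"
  by (rule ext) (simp add: tmul_def sum_subtractf algebra_simps)

lemma tmul_diff_right [simp]: "tmul h (f - g) = tmul h f - tmul h g"
  by (rule ext) (simp add: tmul_def sum_subtractf algebra_simps)

lemma tmul_zero_left [simp]: "tmul 0 h = 0"
  by (rule ext) (simp add: tmul_def)

lemma tmul_zero_right [simp]: "tmul h 0 = 0"
  by (rule ext) (simp add: tmul_def)

lemma tmul_tsc_left [simp]: "tmul (tsc c f) h = tsc c (tmul f h)"
  by (rule ext) (simp add: tmul_def tsc_def sum_distrib_left algebra_simps)

lemma tmul_tsc_right [simp]: "tmul h (tsc c f) = tsc c (tmul h f)"
  by (rule ext) (simp add: tmul_def tsc_def sum_distrib_left algebra_simps)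

lemma tmul_tone_right [simp]: "tmul h tone = h"
proof (rule ext)
  fix w
  have "tmul h tone w = (\<Sum>k\<in>{0..length w}. if k = length w then h w else 0)"
    unfolding tmul_def tone_def by (rule sum.cong) auto
  then show "tmul h tone w = h w" by simp
qed

lemma tsc_tsc [simp]: "tsc c (tsc d f) = tsc (c * d) f"
  by (rule ext) (simp add: tsc_def)

lemma tsc_0 [simp]: "tsc 0 f = 0"
  by (rule ext) (simp add: tsc_def)

lemma tsc_1 [simp]: "tsc 1 f = f"
  by (rule ext) (simp add: tsc_def)

lemma minus_eq_plus_tsc: "f - g = f + tsc (-1) g"
  by (rule ext) (simp add: tsc_def)

lemma tspace_tgen: "A \<in> sl l \<Longrightarrow> tgen A \<in> tspace l"
proof -
  assume "A \<in> sl l"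
  moreover have "finite {w. tgen A w \<noteq> 0}"
    by (rule finite_subset[of _ "{[A]}"]) (auto simp: tgen_def)
  ultimately show ?thesis by (auto simp: tspace_def tgen_def)
qed

lemma tspace_tsc: "f \<in> tspace l \<Longrightarrow> tsc c f \<in> tspace l"
proof -
  assume f: "f \<in> tspace l"
  have "{w. tsc c f w \<noteq> 0} \<subseteq> {w. f w \<noteq> 0}" by (auto simp: tsc_def)
  with f show ?thesis by (auto simp: tspace_def tsc_def intro: finite_subset)
qed

section \<open>The enveloping algebra as a quotient of the tensor algebra\<close>

lemma uideal_add: "x \<in> uideal l \<Longrightarrow> y \<in> uideal l \<Longrightarrow> x + y \<in> uideal l"
  using uideal.add[of x l y] by simp

lemma uideal_diff: "x \<in> uideal l \<Longrightarrow> y \<in> uideal l \<Longrightarrow> x - y \<in> uideal l"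
  unfolding minus_eq_plus_tsc[of x] by (intro uideal_add uideal.sc)

definition ucong :: "nat \<Rightarrow> tens \<Rightarrow> tens \<Rightarrow> bool" where
  "ucong l x y \<longleftrightarrow> x - y \<in> uideal l"

lemma ucong_refl [simp]: "ucong l x x"
  using uideal.zero by (simp add: ucong_def)

lemma ucong_sym: "ucong l x y \<Longrightarrow> ucong l y x"
  using uideal_diff[OF uideal.zero, of "x - y" l] by (simp add: ucong_def)

lemma ucong_trans [trans]: "ucong l x y \<Longrightarrow> ucong l y z \<Longrightarrow> ucong l x z"
  using uideal_add[of "x - y" l "y - z"] by (simp add: ucong_def)

lemma ucong_add: "ucong l x x' \<Longrightarrow> ucong l y y' \<Longrightarrow> ucong l (x + y) (x' + y')"
  using uideal_add[of "x - x'" l "y - y'"] by (simp add: ucong_def algebra_simps)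

lemma ucong_diff: "ucong l x x' \<Longrightarrow> ucong l y y' \<Longrightarrow> ucong l (x - y) (x' - y')"
  using uideal_diff[of "x - x'" l "y - y'"] by (simp add: ucong_def algebra_simps)

lemma ucong_tmul_left: "ucong l x x' \<Longrightarrow> y \<in> tspace l \<Longrightarrow> ucong l (tmul x y) (tmul x' y)"
  unfolding ucong_def using uideal.rmul by (metis tmul_diff_left)

lemma ucong_tmul_right: "x \<in> tspace l \<Longrightarrow> ucong l y y' \<Longrightarrow> ucong l (tmul x y) (tmul x y')"
  unfolding ucong_def using uideal.lmul by (metis tmul_diff_right)

lemma ucong_tmul:
  "ucong l x x' \<Longrightarrow> ucong l y y' \<Longrightarrow> x \<in> tspace l \<Longrightarrow> y' \<in> tspace l \<Longrightarrow> ucong l (tmul x y) (tmul x' y')"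
  using ucong_tmul_right ucong_tmul_left ucong_trans by blast

lemma Rmod_ucong: "x \<in> Rmod l \<Longrightarrow> ucong l y x \<Longrightarrow> y \<in> Rmod l"
  using Rmod.add[OF _ Rmod.ideal, of x l "y - x"] by (simp add: ucong_def)

lemma leftN_add: "x \<in> leftN l \<Longrightarrow> y \<in> leftN l \<Longrightarrow> x + y \<in> leftN l"
  using leftN.add[of x l y] by simp

lemma leftN_diff: "x \<in> leftN l \<Longrightarrow> y \<in> leftN l \<Longrightarrow> x - y \<in> leftN l"
  unfolding minus_eq_plus_tsc[of x] by (intro leftN_add leftN.sc)

lemma leftN_ucong: "x \<in> leftN l \<Longrightarrow> ucong l y x \<Longrightarrow> y \<in> leftN l"
  using leftN_add[OF _ leftN.ideal, of x l "y - x"] by (simp add: ucong_def)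

lemma tgen_madd: "A \<in> sl l \<Longrightarrow> B \<in> sl l \<Longrightarrow> ucong l (tgen (madd A B)) (tgen A + tgen B)"
  using uideal.lin_add[of A l B] by (simp add: ucong_def)

lemma tgen_msc: "A \<in> sl l \<Longrightarrow> ucong l (tgen (msc c A)) (tsc c (tgen A))"
  using uideal.lin_sc[of A l c] by (simp add: ucong_def)

lemma tgen_zero: "ucong l (tgen (\<lambda>i j. 0)) 0"
  using tgen_msc[of "\<lambda>i j. 0" l 0] by (simp add: sl_def msc_def)

definition ad :: "mat \<Rightarrow> tens \<Rightarrow> tens" where
  "ad X x = tmul (tgen X) x - tmul x (tgen X)"

lemma ad_add [simp]: "ad X (x + y) = ad X x + ad X y"
  by (simp add: ad_def algebra_simps)

lemma ad_diff [simp]: "ad X (x - y) = ad X x - ad X y"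
  by (simp add: ad_def algebra_simps)

lemma ad_tmul: "ad X (tmul x y) = tmul (ad X x) y + tmul x (ad X y)"
  by (simp add: ad_def tmul_assoc algebra_simps)

lemma ucong_ad: "X \<in> sl l \<Longrightarrow> ucong l x y \<Longrightarrow> ucong l (ad X x) (ad X y)"
proof -
  assume X: "X \<in> sl l" and "ucong l x y"
  then have "x - y \<in> uideal l" by (simp add: ucong_def)
  then have "tmul (tgen X) (x - y) - tmul (x - y) (tgen X) \<in> uideal l"
    using X by (blast intro: uideal_diff uideal.lmul uideal.rmul tspace_tgen)
  then show ?thesis by (simp add: ucong_def ad_def algebra_simps)
qed

lemma ucong_ad_tmul:
  assumes "ucong l (ad X x) x'" "ucong l (ad X y) y'" "x \<in> tspace l" "y \<in> tspace l"
  shows "ucong l (ad X (tmul x y)) (tmul x' y + tmul x y')"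
  unfolding ad_tmul using assms by (intro ucong_add ucong_tmul_left ucong_tmul_right)

lemma ad_tgen: "X \<in> sl l \<Longrightarrow> Y \<in> sl l \<Longrightarrow> ucong l (ad X (tgen Y)) (tgen (mbr l X Y))"
  using uideal.comm[of X l Y] by (simp add: ucong_def ad_def)

lemma Rmod_ad: "x \<in> Rmod l \<Longrightarrow> X \<in> sl l \<Longrightarrow> ad X x \<in> Rmod l"
  using Rmod.ad[of x l X] by (simp add: ad_def)

definition is_diagonal :: "mat \<Rightarrow> bool" where
  "is_diagonal H \<longleftrightarrow> (\<forall>i j. i \<noteq> j \<longrightarrow> H i j = 0)"

definition Hmat :: "nat \<Rightarrow> nat \<Rightarrow> mat" where
  "Hmat p q = madd (Emat p p) (msc (-1) (Emat q q))"

lemma is_diagonal_Hmat: "is_diagonal (Hmat p q)"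
  by (simp add: is_diagonal_def Hmat_def madd_def msc_def Emat_def)

lemma cartan_sl: "H \<in> cartan l \<Longrightarrow> H \<in> sl l"
  by (simp add: cartan_def)

lemma cartan_is_diagonal: "H \<in> cartan l \<Longrightarrow> is_diagonal H"
  by (simp add: cartan_def is_diagonal_def)

lemma sl_Emat: "a \<in> {1..l+1} \<Longrightarrow> b \<in> {1..l+1} \<Longrightarrow> a \<noteq> b \<Longrightarrow> Emat a b \<in> sl l"
proof -
  assume "a \<in> {1..l+1}" "b \<in> {1..l+1}" "a \<noteq> b"
  moreover from \<open>a \<noteq> b\<close> have "(\<Sum>i=1..l+1. Emat a b i i) = 0"
    by (intro sum.neutral) (auto simp: Emat_def)
  ultimately show ?thesis by (auto simp: sl_def Emat_def)
qed

lemma sl_Hmat: "p \<in> {1..l+1} \<Longrightarrow> q \<in> {1..l+1} \<Longrightarrow> Hmat p q \<in> sl l"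
proof -
  assume p: "p \<in> {1..l+1}" and q: "q \<in> {1..l+1}"
  have "(\<Sum>i=1..l+1. Hmat p q i i) = (\<Sum>i=1..l+1. (if i = p then 1 else 0) - (if i = q then 1 else (0::complex)))"
    by (rule sum.cong) (auto simp: Hmat_def madd_def msc_def Emat_def)
  also have "\<dots> = 0"
    using p q by (simp only: sum_subtractf sum.delta' finite_atLeastAtMost) simp
  finally show ?thesis
    using p q by (auto simp: sl_def Hmat_def madd_def msc_def Emat_def)
qed

lemma sl_msc: "A \<in> sl l \<Longrightarrow> msc c A \<in> sl l"
proof -
  assume A: "A \<in> sl l"
  have "(\<Sum>i=1..l+1. msc c A i i) = c * (\<Sum>i=1..l+1. A i i)"
    unfolding msc_def by (rule sum_distrib_left[symmetric])
  with A show ?thesis by (auto simp: sl_def msc_def)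
qed

lemma mbr_Emat_Emat:
  assumes "b \<in> {1..l+1}" "d \<in> {1..l+1}"
  shows "mbr l (Emat a b) (Emat c d) =
    (\<lambda>i j. (if b = c \<and> i = a \<and> j = d then 1 else 0) - (if d = a \<and> i = c \<and> j = b then 1 else 0))"
proof (rule ext, rule ext)
  fix i j
  have "mbr l (Emat a b) (Emat c d) i j =
    (\<Sum>k=1..l+1. (if k = b then (if i = a \<and> b = c \<and> j = d then 1 else 0) else 0)
      - (if k = d then (if i = c \<and> d = a \<and> j = b then 1 else 0) else 0))"
    unfolding mbr_def Emat_def by (intro sum.cong refl arg_cong2[where f = minus]) simp_all
  also have "\<dots> = (if b = c \<and> i = a \<and> j = d then 1 else 0) - (if d = a \<and> i = c \<and> j = b then 1 else 0)"
    using assms by (simp only: sum_subtractf sum.delta finite_atLeastAtMost if_True) auto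
  finally show "mbr l (Emat a b) (Emat c d) i j = \<dots>" .
qed

lemma mbr_diagonal_Emat:
  assumes "is_diagonal H" "a \<in> {1..l+1}" "b \<in> {1..l+1}"
  shows "mbr l H (Emat a b) = msc (H a a - H b b) (Emat a b)"
proof (rule ext, rule ext)
  fix i j
  have "mbr l H (Emat a b) i j =
    (\<Sum>k=1..l+1. (if k = a then (if j = b then H i a else 0) else 0)
      - (if k = b then (if i = a then H b j else 0) else 0))"
    unfolding mbr_def Emat_def by (rule sum.cong) auto
  also have "\<dots> = (if j = b then H i a else 0) - (if i = a then H b j else 0)"
    using assms by (simp only: sum_subtractf sum.delta' finite_atLeastAtMost) auto
  also have "\<dots> = msc (H a a - H b b) (Emat a b) i j"
    using assms(1) unfolding is_diagonal_def msc_def Emat_def by auto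
  finally show "mbr l H (Emat a b) i j = \<dots>" .
qed

lemma mbr_diagonal_diagonal:
  assumes "is_diagonal A" "is_diagonal B"
  shows "mbr l A B = (\<lambda>i j. 0)"
proof (rule ext, rule ext)
  fix i j
  have "mbr l A B i j = (\<Sum>k=1..l+1. if k = i then (if i = j then A i i * B i i - B i i * A i i else 0) else 0)"
    unfolding mbr_def using assms unfolding is_diagonal_def by (intro sum.cong) auto
  then show "mbr l A B i j = 0" by (simp add: sum.delta')
qed

lemma mbr_antisym: "mbr l A B = msc (-1) (mbr l B A)"
  by (rule ext, rule ext)
    (simp add: mbr_def msc_def sum_subtractf[symmetric] sum_negf[symmetric] algebra_simps)

section \<open>Commutation relations in the enveloping algebra\<close>

definition tE :: "nat \<Rightarrow> nat \<Rightarrow> tens" where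
  "tE a b = tgen (Emat a b)"

definition tH :: "nat \<Rightarrow> nat \<Rightarrow> tens" where
  "tH p q = tgen (Hmat p q)"

definition bracket_tE :: "nat \<Rightarrow> nat \<Rightarrow> nat \<Rightarrow> nat \<Rightarrow> tens" where
  "bracket_tE a b c d =
    (if b = c \<and> d = a then tH a b else if b = c then tE a d else if d = a then tsc (-1) (tE c b) else 0)"

lemma tspace_tE: "a \<in> {1..l+1} \<Longrightarrow> b \<in> {1..l+1} \<Longrightarrow> a \<noteq> b \<Longrightarrow> tE a b \<in> tspace l"
  unfolding tE_def by (intro tspace_tgen sl_Emat)

lemma tspace_tH: "p \<in> {1..l+1} \<Longrightarrow> q \<in> {1..l+1} \<Longrightarrow> tH p q \<in> tspace l"
  unfolding tH_def by (intro tspace_tgen sl_Hmat)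

lemma hh_eq_tH: "hh i = tH i (i + 1)"
  by (simp add: hh_def tH_def Hmat_def)

lemma ad_tE_tE:
  assumes "{a, b, c, d} \<subseteq> {1..l+1}" "a \<noteq> b" "c \<noteq> d"
  shows "ucong l (ad (Emat a b) (tE c d)) (bracket_tE a b c d)"
proof -
  have ad: "ucong l (ad (Emat a b) (tE c d)) (tgen (mbr l (Emat a b) (Emat c d)))"
    unfolding tE_def using assms by (intro ad_tgen sl_Emat) auto
  have mbr: "mbr l (Emat a b) (Emat c d) =
    (\<lambda>i j. (if b = c \<and> i = a \<and> j = d then 1 else 0) - (if d = a \<and> i = c \<and> j = b then 1 else 0))"
    using assms by (intro mbr_Emat_Emat) auto
  consider "b = c" "d = a" | "b = c" "d \<noteq> a" | "b \<noteq> c" "d = a" | "b \<noteq> c" "d \<noteq> a"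
    by blast
  then show ?thesis
  proof cases
    case 1
    then have "mbr l (Emat a b) (Emat c d) = Hmat a b"
      unfolding mbr by (auto simp: Hmat_def madd_def msc_def Emat_def)
    with ad 1 show ?thesis by (simp add: bracket_tE_def tH_def)
  next
    case 2
    then have "mbr l (Emat a b) (Emat c d) = Emat a d"
      unfolding mbr by (auto simp: Emat_def)
    with ad 2 show ?thesis by (simp add: bracket_tE_def tE_def)
  next
    case 3
    then have "mbr l (Emat a b) (Emat c d) = msc (-1) (Emat c b)"
      unfolding mbr by (auto simp: Emat_def msc_def)
    moreover have "ucong l (tgen (msc (-1) (Emat c b))) (tsc (-1) (tE c b))"
      unfolding tE_def using assms 3 by (intro tgen_msc sl_Emat) auto
    ultimately show ?thesis using ad 3 by (simp add: bracket_tE_def ucong_trans)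
  next
    case 4
    then have "mbr l (Emat a b) (Emat c d) = (\<lambda>i j. 0)"
      unfolding mbr by auto
    with ad 4 tgen_zero show ?thesis by (simp add: bracket_tE_def) (metis ucong_trans)
  qed
qed

lemma ad_cartan_tE:
  assumes "H \<in> cartan l" "a \<in> {1..l+1}" "b \<in> {1..l+1}" "a \<noteq> b"
  shows "ucong l (ad H (tE a b)) (tsc (H a a - H b b) (tE a b))"
proof -
  have "ucong l (ad H (tE a b)) (tgen (mbr l H (Emat a b)))"
    unfolding tE_def using assms by (intro ad_tgen sl_Emat cartan_sl)
  also have "mbr l H (Emat a b) = msc (H a a - H b b) (Emat a b)"
    using assms by (intro mbr_diagonal_Emat cartan_is_diagonal)
  also have "ucong l (tgen \<dots>) (tsc (H a a - H b b) (tE a b))"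
    unfolding tE_def using assms by (intro tgen_msc sl_Emat)
  finally show ?thesis .
qed

lemma ad_cartan_tH:
  assumes "H \<in> cartan l" "p \<in> {1..l+1}" "q \<in> {1..l+1}"
  shows "ucong l (ad H (tH p q)) 0"
proof -
  have "ucong l (ad H (tH p q)) (tgen (mbr l H (Hmat p q)))"
    unfolding tH_def using assms by (intro ad_tgen sl_Hmat cartan_sl)
  also have "mbr l H (Hmat p q) = (\<lambda>i j. 0)"
    using assms by (intro mbr_diagonal_diagonal cartan_is_diagonal is_diagonal_Hmat)
  finally show ?thesis using tgen_zero ucong_trans by blast
qed

lemma ad_Emat_tH:
  assumes "{a, b, p, q} \<subseteq> {1..l+1}" "a \<noteq> b"
  shows "ucong l (ad (Emat a b) (tH p q)) (tsc (Hmat p q b b - Hmat p q a a) (tE a b))"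
proof -
  have "ucong l (ad (Emat a b) (tH p q)) (tgen (mbr l (Emat a b) (Hmat p q)))"
    unfolding tH_def using assms by (intro ad_tgen sl_Hmat sl_Emat) auto
  also have "mbr l (Emat a b) (Hmat p q) = msc (Hmat p q b b - Hmat p q a a) (Emat a b)"
    using assms by (subst mbr_antisym, subst mbr_diagonal_Emat)
      (auto simp: is_diagonal_Hmat msc_def algebra_simps)
  also have "ucong l (tgen \<dots>) (tsc (Hmat p q b b - Hmat p q a a) (tE a b))"
    unfolding tE_def using assms by (intro tgen_msc sl_Emat) auto
  finally show ?thesis .
qed

lemma tH_trans:
  assumes "{p, q, s} \<subseteq> {1..l+1}"
  shows "ucong l (tH p q + tH q s) (tH p s)"
proof -
  have "madd (Hmat p q) (Hmat q s) = Hmat p s"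
    by (rule ext, rule ext) (simp add: Hmat_def madd_def msc_def Emat_def)
  moreover have "ucong l (tgen (madd (Hmat p q) (Hmat q s))) (tH p q + tH q s)"
    unfolding tH_def using assms by (intro tgen_madd sl_Hmat) auto
  ultimately show ?thesis by (metis tH_def ucong_sym)
qed

lemma tH_swap:
  assumes "p \<in> {1..l+1}" "q \<in> {1..l+1}"
  shows "ucong l (tH q p) (tsc (-1) (tH p q))"
proof -
  have "Hmat q p = msc (-1) (Hmat p q)"
    by (rule ext, rule ext) (simp add: Hmat_def madd_def msc_def Emat_def)
  moreover have "ucong l (tgen (msc (-1) (Hmat p q))) (tsc (-1) (tH p q))"
    unfolding tH_def using assms by (intro tgen_msc sl_Hmat)
  ultimately show ?thesis by (simp add: tH_def)
qed

lemma tE_commute: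
  assumes "a \<in> {1..l+1}" "b \<in> {1..l+1}" "a \<noteq> b"
  shows "ucong l (tmul (tE a b) (tE b a)) (tmul (tE b a) (tE a b) + tH a b)"
proof -
  have "tmul (tE a b) (tE b a) = tmul (tE b a) (tE a b) + ad (Emat a b) (tE b a)"
    by (simp add: ad_def tE_def)
  moreover have "ucong l (ad (Emat a b) (tE b a)) (tH a b)"
    using ad_tE_tE[of a b b a l] assms by (simp add: bracket_tE_def)
  ultimately show ?thesis by (simp add: ucong_add)
qed

section \<open>Minors in the module R\<close>

definition minor :: "nat \<Rightarrow> nat \<Rightarrow> nat \<Rightarrow> nat \<Rightarrow> tens" where
  "minor a b c d = tmul (tE a c) (tE b d) - tmul (tE b c) (tE a d)"

definition minor_in_R :: "nat \<Rightarrow> nat \<Rightarrow> nat \<Rightarrow> nat \<Rightarrow> nat \<Rightarrow> bool" where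
  "minor_in_R l a b c d \<longleftrightarrow>
    {a, b, c, d} \<subseteq> {1..l+1} \<and> distinct [a, b, c, d] \<and> minor a b c d \<in> Rmod l"

lemma ad_Emat_tmul_tE:
  assumes "{x, y, a, b, c, d} \<subseteq> {1..l+1}" "x \<noteq> y" "a \<noteq> b" "c \<noteq> d"
  shows "ucong l (ad (Emat x y) (tmul (tE a b) (tE c d)))
    (tmul (bracket_tE x y a b) (tE c d) + tmul (tE a b) (bracket_tE x y c d))"
  using assms by (intro ucong_ad_tmul ad_tE_tE tspace_tE) auto

lemma tE_tmul_commute:
  assumes "{a, b, c, d} \<subseteq> {1..l+1}" "a \<noteq> b" "c \<noteq> d" "b \<noteq> c" "d \<noteq> a"
  shows "ucong l (tmul (tE a b) (tE c d)) (tmul (tE c d) (tE a b))"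
proof -
  have "tmul (tE a b) (tE c d) = tmul (tE c d) (tE a b) + ad (Emat a b) (tE c d)"
    by (simp add: ad_def tE_def)
  moreover have "ucong l (ad (Emat a b) (tE c d)) 0"
    using ad_tE_tE[OF assms(1-3)] assms(4,5) by (simp add: bracket_tE_def)
  ultimately show ?thesis using ucong_add[OF ucong_refl] by fastforce
qed

lemma minor_in_R_replace_first:
  assumes "minor_in_R l a b c d" "x \<in> {1..l+1}" "x \<notin> {a, b, c, d}"
  shows "minor_in_R l x b c d"
proof -
  have "ucong l (ad (Emat x a) (minor a b c d))
    (tmul (bracket_tE x a a c) (tE b d) + tmul (tE a c) (bracket_tE x a b d)
      - (tmul (bracket_tE x a b c) (tE a d) + tmul (tE b c) (bracket_tE x a a d)))"
    unfolding minor_def ad_diff using assms by (intro ucong_diff ad_Emat_tmul_tE) (auto simp: minor_in_R_def)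
  also have "\<dots> = minor x b c d"
    using assms by (auto simp: bracket_tE_def minor_def minor_in_R_def)
  finally have "ucong l (minor x b c d) (ad (Emat x a) (minor a b c d))"
    by (rule ucong_sym)
  moreover have "ad (Emat x a) (minor a b c d) \<in> Rmod l"
    using assms by (intro Rmod_ad sl_Emat) (auto simp: minor_in_R_def)
  ultimately show ?thesis
    using assms by (auto simp: minor_in_R_def intro: Rmod_ucong)
qed

lemma minor_in_R_swap_rows:
  assumes "minor_in_R l a b c d"
  shows "minor_in_R l b a c d"
proof -
  have "minor b a c d = tsc (-1) (minor a b c d)"
    by (rule ext) (simp add: minor_def tsc_def)
  with assms show ?thesis by (auto simp: minor_in_R_def intro: Rmod.sc)
qed

lemma minor_in_R_swap_cols:
  assumes "minor_in_R l a b c d"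
  shows "minor_in_R l a b d c"
proof -
  have "ucong l (minor a b d c) (tmul (tE b c) (tE a d) - tmul (tE a c) (tE b d))"
    unfolding minor_def using assms by (intro ucong_diff tE_tmul_commute) (auto simp: minor_in_R_def)
  also have "\<dots> = tsc (-1) (minor a b c d)"
    by (rule ext) (simp add: minor_def tsc_def)
  finally show ?thesis
    using assms by (auto simp: minor_in_R_def intro: Rmod_ucong Rmod.sc)
qed

text \<open>For \<open>l = 3\<close> there is no fifth index, so a row index and a column index cannot be exchanged
  by replacements with fresh indices. Instead, \<open>ad E\<^sub>c\<^sub>b\<close> applied twice to \<open>minor a b c d\<close> gives
  \<open>-2 minor a c b d\<close>.\<close>

lemma minor_in_R_swap_mid:
  assumes "minor_in_R l a b c d"
  shows "minor_in_R l a c b d"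
proof -
  have idx: "{a, b, c, d} \<subseteq> {1..l+1}" "distinct [a, b, c, d]" and R: "minor a b c d \<in> Rmod l"
    using assms by (auto simp: minor_in_R_def)
  have X: "Emat c b \<in> sl l"
    using idx by (intro sl_Emat) auto
  define S where "S = tmul (tE a c) (tE c d) - tmul (tE a b) (tE b d) - tmul (tH c b) (tE a d)"
  have "ucong l (ad (Emat c b) (minor a b c d))
    (tmul (bracket_tE c b a c) (tE b d) + tmul (tE a c) (bracket_tE c b b d)
      - (tmul (bracket_tE c b b c) (tE a d) + tmul (tE b c) (bracket_tE c b a d)))"
    unfolding minor_def ad_diff using idx by (intro ucong_diff ad_Emat_tmul_tE) auto
  also have "\<dots> = S"
    using idx by (simp add: bracket_tE_def S_def) (rule ext, simp add: tsc_def algebra_simps)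
  finally have "ucong l (ad (Emat c b) (ad (Emat c b) (minor a b c d))) (ad (Emat c b) S)"
    by (rule ucong_ad[OF X])
  also have "ucong l (ad (Emat c b) S)
    (tmul (bracket_tE c b a c) (tE c d) + tmul (tE a c) (bracket_tE c b c d)
      - (tmul (bracket_tE c b a b) (tE b d) + tmul (tE a b) (bracket_tE c b b d))
      - (tmul (tsc (Hmat c b b b - Hmat c b c c) (tE c b)) (tE a d) + tmul (tH c b) (bracket_tE c b a d)))"
    unfolding S_def ad_diff using idx
    by (intro ucong_diff ad_Emat_tmul_tE ucong_ad_tmul ad_Emat_tH ad_tE_tE tspace_tH tspace_tE) auto
  also have "\<dots> = tsc (-2) (minor a c b d)"
    using idx by (simp add: bracket_tE_def minor_def Hmat_def madd_def msc_def Emat_def)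
      (rule ext, simp add: tsc_def algebra_simps)
  finally have "tsc (-2) (minor a c b d) \<in> Rmod l"
    using R X by (blast intro: Rmod_ucong Rmod_ad ucong_sym)
  then have "tsc (-1/2) (tsc (-2) (minor a c b d)) \<in> Rmod l"
    by (rule Rmod.sc)
  then show ?thesis
    using idx by (simp add: minor_in_R_def insert_commute)
qed

lemma minor_in_R_replace_second:
  "minor_in_R l a b c d \<Longrightarrow> x \<in> {1..l+1} \<Longrightarrow> x \<notin> {a, b, c, d} \<Longrightarrow> minor_in_R l a x c d"
  using minor_in_R_replace_first[of l b a c d x] by (auto intro: minor_in_R_swap_rows)

lemma minor_in_R_replace_third:
  "minor_in_R l a b c d \<Longrightarrow> x \<in> {1..l+1} \<Longrightarrow> x \<notin> {a, b, c, d} \<Longrightarrow> minor_in_R l a b x d"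
  using minor_in_R_replace_second[of l a c b d x] by (auto intro: minor_in_R_swap_mid)

lemma minor_in_R_replace_fourth:
  "minor_in_R l a b c d \<Longrightarrow> x \<in> {1..l+1} \<Longrightarrow> x \<notin> {a, b, c, d} \<Longrightarrow> minor_in_R l a b c x"
  using minor_in_R_replace_third[of l a b d c x] by (auto intro: minor_in_R_swap_cols)

lemma minor_in_R_move_first:
  assumes "minor_in_R l a b c d" "w \<in> {1..l+1}"
  shows "\<exists>b' c' d'. minor_in_R l w b' c' d'"
proof -
  consider "w = a" | "w = b" | "w = c" | "w = d" | "w \<notin> {a, b, c, d}"
    by auto
  then show ?thesis
  proof cases
    case 1 with assms show ?thesis by blast
  next
    case 2 with minor_in_R_swap_rows[OF assms(1)] show ?thesis by blast
  next
    case 3 with minor_in_R_swap_rows[OF minor_in_R_swap_mid[OF assms(1)]] show ?thesis by blast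
  next
    case 4
    with minor_in_R_swap_rows[OF minor_in_R_swap_mid[OF minor_in_R_swap_cols[OF assms(1)]]]
    show ?thesis by blast
  next
    case 5 with minor_in_R_replace_first[OF assms] show ?thesis by blast
  qed
qed

lemma minor_in_R_move_second:
  assumes "minor_in_R l w b c d" "x \<in> {1..l+1}" "x \<noteq> w"
  shows "\<exists>c' d'. minor_in_R l w x c' d'"
proof -
  consider "x = b" | "x = c" | "x = d" | "x \<notin> {w, b, c, d}"
    using assms(3) by auto
  then show ?thesis
  proof cases
    case 1 with assms show ?thesis by blast
  next
    case 2 with minor_in_R_swap_mid[OF assms(1)] show ?thesis by blast
  next
    case 3 with minor_in_R_swap_mid[OF minor_in_R_swap_cols[OF assms(1)]] show ?thesis by blast
  next
    case 4 with minor_in_R_replace_second[OF assms(1,2)] show ?thesis by blast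
  qed
qed

lemma minor_in_R_move_third:
  assumes "minor_in_R l w x c d" "y \<in> {1..l+1}" "y \<notin> {w, x}"
  shows "\<exists>d'. minor_in_R l w x y d'"
proof -
  consider "y = c" | "y = d" | "y \<notin> {w, x, c, d}"
    using assms(3) by auto
  then show ?thesis
  proof cases
    case 1 with assms show ?thesis by blast
  next
    case 2 with minor_in_R_swap_cols[OF assms(1)] show ?thesis by blast
  next
    case 3 with minor_in_R_replace_third[OF assms(1,2)] show ?thesis by blast
  qed
qed

lemma minor_in_R_move_fourth:
  assumes "minor_in_R l w x y d" "z \<in> {1..l+1}" "z \<notin> {w, x, y}"
  shows "minor_in_R l w x y z"
  using assms minor_in_R_replace_fourth[OF assms(1,2)] by (cases "z = d") auto

lemma minor_in_R_reindex:
  assumes "minor_in_R l a b c d" "{w, x, y, z} \<subseteq> {1..l+1}" "distinct [w, x, y, z]"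
  shows "minor_in_R l w x y z"
proof -
  have idx: "w \<in> {1..l+1}" "x \<in> {1..l+1}" "y \<in> {1..l+1}" "z \<in> {1..l+1}"
    using assms(2) by auto
  obtain b' c' d' where "minor_in_R l w b' c' d'"
    using minor_in_R_move_first[OF assms(1) idx(1)] by blast
  then obtain c' d' where "minor_in_R l w x c' d'"
    using minor_in_R_move_second idx(2) assms(3) by fastforce
  then obtain d' where "minor_in_R l w x y d'"
    using minor_in_R_move_third idx(3) assms(3) by fastforce
  then show ?thesis
    using minor_in_R_move_fourth idx(4) assms(3) by auto
qed

lemma tmul_tgen_eroot:
  assumes "{a, b, c, d} \<subseteq> {1..l+1}" "a \<noteq> b" "c \<noteq> d"
  shows "ucong l (tmul (tgen (eroot a b)) (tgen (eroot c d)))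
    (tsc ((-1) ^ (b - a - 1 + (d - c - 1))) (tmul (tE a b) (tE c d)))"
proof -
  have "ucong l (tmul (tgen (eroot a b)) (tgen (eroot c d)))
    (tmul (tsc ((-1) ^ (b - a - 1)) (tE a b)) (tsc ((-1) ^ (d - c - 1)) (tE c d)))"
    unfolding eroot_def tE_def using assms
    by (intro ucong_tmul tgen_msc tspace_tgen tspace_tsc sl_msc sl_Emat) auto
  then show ?thesis by (simp add: power_add mult.commute)
qed

lemma minor_in_R_vprime:
  assumes "l \<ge> 3"
  shows "minor_in_R l 1 2 (l+1) l"
proof -
  have idx: "{1, 2, l+1, l} \<subseteq> {1..l+1}" "distinct [1, 2, l+1, l]"
    using assms by auto
  have signs: "(-1::complex) ^ (l - 1 + (l - 3)) = 1" "(-1::complex) ^ (l - 2 + (l - 2)) = 1"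
    using assms by (auto intro!: neg_one_even_power)
  have "ucong l (vprime l)
    (tsc ((-1) ^ (l - 1 + (l - 3))) (tmul (tE 1 (l+1)) (tE 2 l))
      - tsc ((-1) ^ (l - 2 + (l - 2))) (tmul (tE 2 (l+1)) (tE 1 l)))"
    unfolding vprime_def tsub_eq_minus using assms
    by (intro ucong_diff) (rule tmul_tgen_eroot[THEN ucong_trans]; simp add: numeral_eq_Suc)+
  then have "ucong l (vprime l) (minor 1 2 (l+1) l)"
    by (simp only: signs tsc_1 minor_def)
  with idx show ?thesis
    unfolding minor_in_R_def by (blast intro: Rmod_ucong Rmod.base ucong_sym)
qed

section \<open>Zero-weight elements of R and their Harish-Chandra projections\<close>

definition zero_weight_elem :: "nat \<Rightarrow> nat \<Rightarrow> nat \<Rightarrow> nat \<Rightarrow> tens" where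
  "zero_weight_elem a b c d =
    tmul (tH b a) (tH d c) + tmul (tE d a) (tE a d) - tmul (tE c a) (tE a c)
      - tmul (tE d b) (tE b d) + tmul (tE c b) (tE b c)"

lemma ad_ad_minor:
  assumes "{a, b, c, d} \<subseteq> {1..l+1}" "distinct [a, c, b, d]"
  shows "ucong l (ad (Emat d c) (ad (Emat b a) (minor a c b d))) (zero_weight_elem a b c d)"
proof -
  define S where "S = tmul (tH b a) (tE c d) + tmul (tE c a) (tE a d) - tmul (tE c b) (tE b d)"
  have "ucong l (ad (Emat b a) (minor a c b d))
    (tmul (bracket_tE b a a b) (tE c d) + tmul (tE a b) (bracket_tE b a c d)
      - (tmul (bracket_tE b a c b) (tE a d) + tmul (tE c b) (bracket_tE b a a d)))"
    unfolding minor_def ad_diff using assms by (intro ucong_diff ad_Emat_tmul_tE) auto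
  also have "\<dots> = S"
    using assms by (simp add: bracket_tE_def S_def) (rule ext, simp add: tsc_def algebra_simps)
  finally have "ucong l (ad (Emat d c) (ad (Emat b a) (minor a c b d))) (ad (Emat d c) S)"
    using assms by (intro ucong_ad sl_Emat) auto
  also have "ucong l (ad (Emat d c) S)
    (tmul (tsc (Hmat b a c c - Hmat b a d d) (tE d c)) (tE c d) + tmul (tH b a) (bracket_tE d c c d)
      + (tmul (bracket_tE d c c a) (tE a d) + tmul (tE c a) (bracket_tE d c a d))
      - (tmul (bracket_tE d c c b) (tE b d) + tmul (tE c b) (bracket_tE d c b d)))"
    unfolding S_def ad_diff ad_add using assms
    by (intro ucong_add ucong_diff ad_Emat_tmul_tE ucong_ad_tmul ad_Emat_tH ad_tE_tE tspace_tH tspace_tE)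
      auto
  also have "\<dots> = zero_weight_elem a b c d"
    using assms by (simp add: bracket_tE_def zero_weight_elem_def Hmat_def madd_def msc_def Emat_def)
      (rule ext, simp add: tsc_def algebra_simps)
  finally show ?thesis .
qed

lemma ad_cartan_tmul_tE_tE:
  assumes "H \<in> cartan l" "x \<in> {1..l+1}" "y \<in> {1..l+1}" "x \<noteq> y"
  shows "ucong l (ad H (tmul (tE y x) (tE x y))) 0"
proof -
  have "ucong l (ad H (tmul (tE y x) (tE x y)))
    (tmul (tsc (H y y - H x x) (tE y x)) (tE x y) + tmul (tE y x) (tsc (H x x - H y y) (tE x y)))"
    using assms by (intro ucong_ad_tmul ad_cartan_tE tspace_tE) auto
  also have "\<dots> = 0"
    by (simp, rule ext, simp add: tsc_def algebra_simps)
  finally show ?thesis .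
qed

lemma ad_cartan_tmul_tH_tH:
  assumes "H \<in> cartan l" "{p, q, s, t} \<subseteq> {1..l+1}"
  shows "ucong l (ad H (tmul (tH p q) (tH s t))) 0"
  using ucong_ad_tmul[OF ad_cartan_tH ad_cartan_tH tspace_tH tspace_tH, of H l p q s t] assms
  by simp

lemma zero_weight_elem_R0:
  assumes "minor_in_R l a c b d"
  shows "zero_weight_elem a b c d \<in> R0 l"
proof -
  have idx: "{a, b, c, d} \<subseteq> {1..l+1}" "distinct [a, c, b, d]"
    using assms by (auto simp: minor_in_R_def)
  have "ad (Emat d c) (ad (Emat b a) (minor a c b d)) \<in> Rmod l"
    using assms by (intro Rmod_ad sl_Emat) (auto simp: minor_in_R_def)
  then have R: "zero_weight_elem a b c d \<in> Rmod l"
    using ad_ad_minor[OF idx] by (blast intro: Rmod_ucong ucong_sym)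
  have "ad H (zero_weight_elem a b c d) \<in> uideal l" if H: "H \<in> cartan l" for H
  proof -
    have "ucong l (ad H (zero_weight_elem a b c d)) (0 + 0 - 0 - 0 + 0)"
      unfolding zero_weight_elem_def ad_add ad_diff using idx H
      by (intro ucong_add ucong_diff ad_cartan_tmul_tE_tE ad_cartan_tmul_tH_tH) auto
    then show ?thesis by (simp add: ucong_def)
  qed
  with R show ?thesis by (simp add: R0_def ad_def)
qed

lemma tmul_tE_lower_upper_leftN:
  assumes "x \<in> {1..l+1}" "y \<in> {1..l+1}" "x < y"
  shows "tmul (tE y x) (tE x y) \<in> leftN l"
  unfolding tE_def
proof (rule leftN.gen)
  show "tgen (Emat y x) \<in> tspace l"
    using assms by (intro tspace_tgen sl_Emat) auto
  show "Emat x y \<in> nplus l"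
    using assms sl_Emat[of x l y] by (auto simp: nplus_def Emat_def)
qed

lemma inP0_intro:
  assumes "r \<in> R0 l" "n \<in> leftN l" "ucong l r (p + n)"
  shows "inP0 l p"
proof -
  have "ucong l (r - p) n"
    using assms(3) by (simp add: ucong_def algebra_simps)
  with assms(2) have "r - p \<in> leftN l"
    by (rule leftN_ucong)
  with assms(1) show ?thesis
    unfolding inP0_def by auto
qed

lemma inP0_hh_mult_hh:
  assumes "l \<ge> 3" "1 \<le> i" "i + 2 \<le> j" "j \<le> l"
  shows "inP0 l (tmul (hh i) (hh j))"
proof -
  have idx: "{i, i+1, j, j+1} \<subseteq> {1..l+1}"
    using assms by auto
  have "zero_weight_elem i (i+1) j (j+1) \<in> R0 l"
    using assms by (intro zero_weight_elem_R0 minor_in_R_reindex[OF minor_in_R_vprime]) auto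
  moreover define n where "n =
    tmul (tE (j+1) i) (tE i (j+1)) - tmul (tE j i) (tE i j)
      - tmul (tE (j+1) (i+1)) (tE (i+1) (j+1)) + tmul (tE j (i+1)) (tE (i+1) j)"
  have "n \<in> leftN l"
    unfolding n_def using idx assms by (intro leftN_add leftN_diff tmul_tE_lower_upper_leftN) auto
  moreover have "ucong l (zero_weight_elem i (i+1) j (j+1)) (tmul (hh i) (hh j) + n)"
  proof -
    have "ucong l (tmul (tH (i+1) i) (tH (j+1) j)) (tmul (tsc (-1) (tH i (i+1))) (tsc (-1) (tH j (j+1))))"
      using idx by (intro ucong_tmul tH_swap tspace_tH tspace_tsc) auto
    then have "ucong l (zero_weight_elem i (i+1) j (j+1))
      (tmul (hh i) (hh j) + tmul (tE (j+1) i) (tE i (j+1)) - tmul (tE j i) (tE i j)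
        - tmul (tE (j+1) (i+1)) (tE (i+1) (j+1)) + tmul (tE j (i+1)) (tE (i+1) j))"
      unfolding zero_weight_elem_def hh_eq_tH by (intro ucong_add ucong_diff ucong_refl) simp
    then show ?thesis
      by (simp add: n_def algebra_simps)
  qed
  ultimately show ?thesis
    by (rule inP0_intro)
qed

lemma inP0_hh_mult_sum:
  assumes "l \<ge> 3" "2 \<le> i" "i + 1 \<le> l"
  shows "inP0 l (tmul (hh i) (hh (i - 1) + hh i + hh (i + 1) + tone))"
proof -
  define k where "k = i - 1"
  then have i: "i = k + 1"
    using assms(2) by simp
  have idx: "{k, k+1, k+2, k+3} \<subseteq> {1..l+1}"
    using assms i by auto
  have "zero_weight_elem (k+2) (k+1) (k+3) k \<in> R0 l"
    using assms i by (intro zero_weight_elem_R0 minor_in_R_reindex[OF minor_in_R_vprime]) auto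
  moreover define n where "n =
    tmul (tE (k+2) k) (tE k (k+2)) - tmul (tE (k+3) (k+2)) (tE (k+2) (k+3))
      - tmul (tE (k+1) k) (tE k (k+1)) + tmul (tE (k+3) (k+1)) (tE (k+1) (k+3))"
  have "n \<in> leftN l"
    unfolding n_def using idx by (intro leftN_add leftN_diff tmul_tE_lower_upper_leftN) auto
  moreover have "ucong l (zero_weight_elem (k+2) (k+1) (k+3) k) (tmul (hh i) (hh k + hh i + hh (i+1) + tone) + n)"
  proof -
    have H02: "ucong l (tH k (k+2)) (tH k (k+1) + tH (k+1) (k+2))"
      using idx by (intro tH_trans[THEN ucong_sym]) auto
    have "ucong l (tH k (k+3)) (tH k (k+2) + tH (k+2) (k+3))"
      using idx by (intro tH_trans[THEN ucong_sym]) auto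
    also have "ucong l \<dots> (tH k (k+1) + tH (k+1) (k+2) + tH (k+2) (k+3))"
      using H02 by (intro ucong_add ucong_refl)
    finally have H03: "ucong l (tH k (k+3)) (tH k (k+1) + tH (k+1) (k+2) + tH (k+2) (k+3))" .
    have "ucong l (tmul (tE k (k+2)) (tE (k+2) k)) (tmul (tE (k+2) k) (tE k (k+2)) + tH k (k+2))"
      using idx by (intro tE_commute) auto
    also have "ucong l \<dots> (tmul (tE (k+2) k) (tE k (k+2)) + (tH k (k+1) + tH (k+1) (k+2)))"
      using H02 by (intro ucong_add ucong_refl)
    finally have E02: "ucong l (tmul (tE k (k+2)) (tE (k+2) k))
      (tmul (tE (k+2) k) (tE k (k+2)) + (tH k (k+1) + tH (k+1) (k+2)))" .
    have E01: "ucong l (tmul (tE k (k+1)) (tE (k+1) k)) (tmul (tE (k+1) k) (tE k (k+1)) + tH k (k+1))"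
      using idx by (intro tE_commute) auto
    have "ucong l (zero_weight_elem (k+2) (k+1) (k+3) k)
      (tmul (tH (k+1) (k+2)) (tH k (k+1) + tH (k+1) (k+2) + tH (k+2) (k+3))
        + (tmul (tE (k+2) k) (tE k (k+2)) + (tH k (k+1) + tH (k+1) (k+2)))
        - tmul (tE (k+3) (k+2)) (tE (k+2) (k+3))
        - (tmul (tE (k+1) k) (tE k (k+1)) + tH k (k+1))
        + tmul (tE (k+3) (k+1)) (tE (k+1) (k+3)))"
      unfolding zero_weight_elem_def using idx
      by (intro ucong_add ucong_diff ucong_refl ucong_tmul_right E02 E01 H03 tspace_tH) auto
    then show ?thesis
      by (simp add: i n_def hh_eq_tH numeral_eq_Suc algebra_simps)
  qed
  ultimately have "inP0 l (tmul (hh i) (hh k + hh i + hh (i+1) + tone))"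
    by (rule inP0_intro)
  then show ?thesis
    by (simp add: i)
qed

theorem lemma5p3:
  fixes l :: nat
  assumes "l \<ge> 3"
  shows "(\<forall>i j. 1 \<le> i \<and> i \<le> l - 2 \<and> i + 2 \<le> j \<and> j \<le> l \<longrightarrow>
             inP0 l (tmul (hh i) (hh j)))
       \<and> (\<forall>i. 2 \<le> i \<and> i \<le> l - 1 \<longrightarrow>
             inP0 l (tmul (hh i) (tadd (tadd (tadd (hh (i - 1)) (hh i)) (hh (i + 1))) tone)))"
  using inP0_hh_mult_hh[OF assms] inP0_hh_mult_sum[OF assms] by auto

end
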